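(* Let $X$ be a locally compact Hausdorff space and $\sigma:X\to X$ a homeomorphism. Then each of the following sets is dense in $X$: (1) $\mathrm{Aper}(\sigma)\cup\bigcup_{q\ge1}\mathrm{Fix}_q(\sigma)^\circ$; (2) $\mathrm{Aper}(\sigma)\cup\big(\bigcup_{q\ge1}\mathrm{Fix}_q(\sigma)\big)^\circ$; (3) $\mathrm{Aper}(\sigma)\cup\bigcup_{q\ge1}\mathrm{Per}_q(\sigma)^\circ$; (4) $\mathrm{Aper}(\sigma)\cup\big(\bigcup_{q\ge1}\mathrm{Per}_q(\sigma)\big)^\circ$.
   Context: For $q\ge1$, $\mathrm{Fix}_q(\sigma)=\{x\in X:\sigma^qx=x\}$ and $\mathrm{Per}_q(\sigma)$ is the set of points of least period exactly $q$; $\mathrm{Aper}(\sigma)$ is the set of non-periodic points. A superscript $\circ$ denotes interior in $X$. *)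

theory Defs
  imports "HOL-Analysis.Analysis"
begin

definition Fix :: "nat \<Rightarrow> ('a \<Rightarrow> 'a) \<Rightarrow> 'a set" where
  "Fix q \<sigma> = {x. (\<sigma> ^^ q) x = x}"

definition Per :: "nat \<Rightarrow> ('a \<Rightarrow> 'a) \<Rightarrow> 'a set" where
  "Per q \<sigma> = {x. (\<sigma> ^^ q) x = x \<and> (\<forall>k. 0 < k \<and> k < q \<longrightarrow> (\<sigma> ^^ k) x \<noteq> x)}"

definition Aper :: "('a \<Rightarrow> 'a) \<Rightarrow> 'a set" where
  "Aper \<sigma> = {x. \<forall>q\<ge>1. (\<sigma> ^^ q) x \<noteq> x}"

end

theory Submission
  imports Defs
begin

text \<open>Every point outside \<open>Aper \<sigma>\<close> lies in some closed set \<open>Fix q \<sigma>\<close>, so by Baire's theorem a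
  nonempty open set free of aperiodic points meets the interior of some \<open>Fix q \<sigma>\<close>. For the least
  such \<open>q\<close>, removing the closed sets \<open>Fix k \<sigma>\<close> with \<open>k < q\<close> from that interior leaves a nonempty
  open subset of \<open>Per q \<sigma>\<close>: were it empty, Baire's theorem would produce a smaller \<open>k\<close>. Hence
  \<open>Aper \<sigma> \<union> (\<Union>q. interior (Per q \<sigma>))\<close> is dense, and it is contained in each of the four sets.\<close>

lemma Hausdorff_space_euclidean_t2: "Hausdorff_space (euclidean :: 'a::t2_space topology)"
  unfolding Hausdorff_space_def disjnt_def using hausdorff by auto

lemma Baire_open_meets_interior:
  fixes F :: "'i \<Rightarrow> 'a::t2_space set"
  assumes lc: "locally_compact_space (euclidean :: 'a topology)"
    and U: "open U" "U \<noteq> {}"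
    and I: "countable I"
    and closed: "\<And>k. k \<in> I \<Longrightarrow> closed (F k)"
    and cover: "U \<subseteq> (\<Union>k\<in>I. F k)"
  shows "\<exists>k\<in>I. U \<inter> interior (F k) \<noteq> {}"
proof (rule ccontr)
  assume none: "\<not> ?thesis"
  let ?X = "subtopology (euclidean :: 'a topology) U"
  have "?X interior_of \<Union>((\<lambda>k. U \<inter> F k) ` I) = {}"
  proof (rule Baire_category_alt)
    have "locally_compact_space ?X"
      using U lc Hausdorff_space_euclidean_t2 by (intro locally_compact_space_open_subset) auto
    moreover have "regular_space ?X"
      using lc Hausdorff_space_euclidean_t2
      by (intro regular_space_subtopology locally_compact_Hausdorff_imp_regular_space)
    ultimately show "completely_metrizable_space ?X \<or> locally_compact_space ?X \<and> regular_space ?X"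
      by blast
    show "countable ((\<lambda>k. U \<inter> F k) ` I)"
      using I by simp
  next
    fix T assume "T \<in> (\<lambda>k. U \<inter> F k) ` I"
    then obtain k where k: "k \<in> I" "T = U \<inter> F k" by blast
    have "?X interior_of T = U \<inter> interior (U \<inter> F k)"
      using k U by (simp add: interior_of_subtopology_open)
    also have "\<dots> = {}"
      using none k U by (auto simp: interior_open)
    finally show "closedin ?X T \<and> ?X interior_of T = {}"
      using k closed by (auto intro: closedin_closed_Int)
  qed
  moreover have "\<Union>((\<lambda>k. U \<inter> F k) ` I) = U"
    using cover by auto
  moreover have "?X interior_of U = U"
    using U by (simp add: interior_of_subtopology_open interior_open)
  ultimately show False
    using U by simp
qed

lemma continuous_on_funpow:
  fixes f :: "'a::topological_space \<Rightarrow> 'a"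
  assumes "continuous_on UNIV f"
  shows "continuous_on UNIV (f ^^ n)"
proof (induction n)
  case (Suc n)
  then show ?case
    by (subst funpow.simps(2)) (rule continuous_on_compose[OF Suc continuous_on_subset[OF assms subset_UNIV]])
qed (simp add: continuous_on_id)

lemma closed_Fix:
  fixes \<sigma> :: "'a::t2_space \<Rightarrow> 'a"
  assumes "continuous_on UNIV \<sigma>"
  shows "closed (Fix q \<sigma>)"
  unfolding Fix_def
  by (intro closed_Collect_eq continuous_on_funpow assms continuous_on_id)

lemma Per_eq_Fix_diff: "Per q \<sigma> = Fix q \<sigma> - (\<Union>k\<in>{1..<q}. Fix k \<sigma>)"
  by (auto simp: Per_def Fix_def)

lemma Per_subset_Fix: "Per q \<sigma> \<subseteq> Fix q \<sigma>"
  by (auto simp: Per_eq_Fix_diff)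

lemma UN_interior_subset_interior_UN: "(\<Union>i\<in>I. interior (A i)) \<subseteq> interior (\<Union>i\<in>I. A i)"
  by (intro interior_maximal open_UN open_interior) (auto dest: interior_subset[THEN subsetD])

lemma periodic_open_meets_interior_Per:
  fixes \<sigma> :: "'a::t2_space \<Rightarrow> 'a"
  assumes lc: "locally_compact_space (euclidean :: 'a topology)"
    and cont: "continuous_on UNIV \<sigma>"
    and U: "open U" "U \<noteq> {}"
    and periodic: "U \<subseteq> (\<Union>q\<in>{1..}. Fix q \<sigma>)"
  shows "\<exists>q\<ge>1. U \<inter> interior (Per q \<sigma>) \<noteq> {}"
proof -
  define P where "P q \<longleftrightarrow> q \<ge> 1 \<and> U \<inter> interior (Fix q \<sigma>) \<noteq> {}" for q
  obtain q0 where "P q0"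
    using Baire_open_meets_interior[OF lc U _ _ periodic] closed_Fix[OF cont] by (auto simp: P_def)
  define q where "q = (LEAST q. P q)"
  have "P q"
    unfolding q_def using \<open>P q0\<close> by (rule LeastI)
  have below_q: "\<not> P k" if "k < q" for k
    using that not_less_Least q_def by blast
  define W where "W = U \<inter> interior (Fix q \<sigma>)"
  have W: "open W" "W \<noteq> {}" "W \<subseteq> U" "W \<subseteq> Fix q \<sigma>"
    using \<open>P q\<close> U interior_subset by (auto simp: W_def P_def)
  define V where "V = W - (\<Union>k\<in>{1..<q}. Fix k \<sigma>)"
  have "V \<noteq> {}"
  proof
    assume "V = {}"
    then have "\<exists>k\<in>{1..<q}. W \<inter> interior (Fix k \<sigma>) \<noteq> {}"
      using closed_Fix[OF cont] by (intro Baire_open_meets_interior[OF lc W(1,2)]) (auto simp: V_def)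
    then obtain k where k: "k \<in> {1..<q}" "W \<inter> interior (Fix k \<sigma>) \<noteq> {}"
      by blast
    then have "P k"
      using W(3) by (auto simp: P_def)
    with below_q k show False by auto
  qed
  moreover have "open V"
    unfolding V_def using W(1) closed_Fix[OF cont] by (intro open_Diff closed_UN) auto
  moreover have "V \<subseteq> Per q \<sigma>"
    using W(4) by (auto simp: V_def Per_eq_Fix_diff)
  ultimately have "U \<inter> interior (Per q \<sigma>) \<noteq> {}"
    using interior_maximal[of V "Per q \<sigma>"] W(3) V_def by blast
  then show ?thesis
    using \<open>P q\<close> by (auto simp: P_def)
qed

lemma dense_superset: "closure S = UNIV \<Longrightarrow> S \<subseteq> T \<Longrightarrow> closure T = UNIV"
  by (metis closure_mono top.extremum_uniqueI)

lemma dense_Aper_Un_interior_Per: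
  fixes \<sigma> :: "'a::t2_space \<Rightarrow> 'a"
  assumes lc: "locally_compact_space (euclidean :: 'a topology)"
    and cont: "continuous_on UNIV \<sigma>"
  shows "closure (Aper \<sigma> \<union> (\<Union>q\<in>{1..}. interior (Per q \<sigma>))) = UNIV"
    (is "closure ?S = UNIV")
proof (rule ccontr)
  assume "closure ?S \<noteq> UNIV"
  then have U: "open (- closure ?S)" "- closure ?S \<noteq> {}"
    by auto
  have disjoint: "- closure ?S \<inter> ?S = {}"
    using closure_subset[of ?S] by blast
  then have "- closure ?S \<subseteq> (\<Union>q\<in>{1..}. Fix q \<sigma>)"
    by (auto simp: Aper_def Fix_def)
  with periodic_open_meets_interior_Per[OF lc cont U] disjoint show False
    by blast
qed

theorem corollaryA3:
  fixes \<sigma> :: "'a::t2_space \<Rightarrow> 'a"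
  assumes "locally_compact_space (euclidean :: 'a topology)"
    and "homeomorphic_map euclidean euclidean \<sigma>"
  shows "closure (Aper \<sigma> \<union> (\<Union>q\<in>{1..}. interior (Fix q \<sigma>))) = UNIV \<and>
         closure (Aper \<sigma> \<union> interior (\<Union>q\<in>{1..}. Fix q \<sigma>)) = UNIV \<and>
         closure (Aper \<sigma> \<union> (\<Union>q\<in>{1..}. interior (Per q \<sigma>))) = UNIV \<and>
         closure (Aper \<sigma> \<union> interior (\<Union>q\<in>{1..}. Per q \<sigma>)) = UNIV"
proof -
  have "continuous_on UNIV \<sigma>"
    using homeomorphic_imp_continuous_map[OF assms(2)] by (simp only: continuous_map_iff_continuous2)
  with assms(1) have dense: "closure (Aper \<sigma> \<union> (\<Union>q\<in>{1..}. interior (Per q \<sigma>))) = UNIV"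
    by (rule dense_Aper_Un_interior_Per)
  have Per_Fix: "(\<Union>q\<in>{1..}. interior (Per q \<sigma>)) \<subseteq> (\<Union>q\<in>{1..}. interior (Fix q \<sigma>))"
    by (intro UN_mono order_refl interior_mono Per_subset_Fix)
  show ?thesis
    by (intro conjI dense dense_superset[OF dense] Un_mono[OF order_refl]
        Per_Fix UN_interior_subset_interior_UN order_trans[OF Per_Fix])
qed

end
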